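(* Let $\mathcal H\subseteq\mathcal S_+^d$ be a well-structured preconditioner set. Then for every $y\in\mathbb R^d$, $$\|y\|_{\mathcal H,*}=\inf_{H\in\mathcal H\cap\mathcal S^d_{++},\ \operatorname{Tr}(H)\le 1}\|y\|_{H,*}=\inf_{H\in\mathcal H\cap\mathcal S^d_{++},\ \operatorname{Tr}(H)\le 1}\|y\|_{H^{-1}},$$ where $\|\cdot\|_{H,*}$ denotes the dual norm of $\|\cdot\|_H$.
   Context: $\mathcal S^d_+$ (resp. $\mathcal S^d_{++}$) denotes the set of real symmetric positive semidefinite (resp. positive definite) $d\times d$ matrices. A set $\mathcal H\subseteq\mathcal S_+^d$ is a well-structured preconditioner set if $\mathcal H=\mathcal S_+^d\cap\mathcal K$ for some set $\mathcal K$ of real $d\times d$ matrices that is closed under scalar multiplication, matrix addition and matrix multiplication and contains the identity $I_d$. For $H\in\mathcal S_+^d$, $\|x\|_H=\sqrt{x^\top Hx}$. The $\mathcal H$-norm is $\|x\|_{\mathcal H}:=\sup_{H\in\mathcal H,\operatorname{Tr}(H)\le 1}\|x\|_H$, and $\|y\|_{\mathcal H,*}:=\sup_{\|x\|_{\mathcal H}\le 1}\langle x,y\rangle$ is its dual norm. *)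

theory Defs
  imports "HOL-Analysis.Analysis"
begin

definition psd :: "real^'n^'n \<Rightarrow> bool" where
  "psd A \<longleftrightarrow> transpose A = A \<and> (\<forall>x. 0 \<le> x \<bullet> (A *v x))"

definition pd :: "real^'n^'n \<Rightarrow> bool" where
  "pd A \<longleftrightarrow> transpose A = A \<and> (\<forall>x. x \<noteq> 0 \<longrightarrow> 0 < x \<bullet> (A *v x))"

definition matrix_algebra :: "(real^'n^'n) set \<Rightarrow> bool" where
  "matrix_algebra K \<longleftrightarrow>
     (\<forall>c A. A \<in> K \<longrightarrow> c *\<^sub>R A \<in> K) \<and>
     (\<forall>A B. A \<in> K \<longrightarrow> B \<in> K \<longrightarrow> A + B \<in> K) \<and>
     (\<forall>A B. A \<in> K \<longrightarrow> B \<in> K \<longrightarrow> A ** B \<in> K) \<and>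
     mat 1 \<in> K"

definition well_structured :: "(real^'n^'n) set \<Rightarrow> bool" where
  "well_structured \<H> \<longleftrightarrow> (\<exists>K. matrix_algebra K \<and> \<H> = {A. psd A} \<inter> K)"

definition Hnorm :: "real^'n^'n \<Rightarrow> real^'n \<Rightarrow> real" where
  "Hnorm H x = sqrt (x \<bullet> (H *v x))"

definition setnorm :: "(real^'n^'n) set \<Rightarrow> real^'n \<Rightarrow> real" where
  "setnorm \<H> x = (SUP H\<in>{H\<in>\<H>. trace H \<le> 1}. Hnorm H x)"

definition dual_norm :: "(real^'n \<Rightarrow> real) \<Rightarrow> real^'n \<Rightarrow> real" where
  "dual_norm N y = Sup {x \<bullet> y | x. N x \<le> 1}"

end

theory Submission
  imports Defs
begin

text \<open>
  For positive definite \<open>P\<close> the dual of \<open>x \<mapsto> \<parallel>x\<parallel>\<^sub>P\<close> is \<open>y \<mapsto> \<parallel>y\<parallel>\<^bsub>P\<^sup>-\<^sup>1\<^esub>\<close>, by Cauchy-Schwarz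
  in the \<open>P\<close>-inner product; and since each \<open>\<parallel>\<cdot>\<parallel>\<^sub>H\<close> with \<open>H\<close> in the trace ball is dominated by
  the \<open>\<H>\<close>-norm, the dual \<open>\<H>\<close>-norm is at most the infimum.

  For the converse fix \<open>\<delta> > 0\<close> and take an approximate minimiser \<open>H\<close> of
  \<open>f(H) = y\<^sup>T (H + \<delta> I)\<^sup>-\<^sup>1 y\<close> over the trace ball, which is convex because \<open>\<H>\<close> is a convex cone.
  With \<open>x = (H + \<delta> I)\<^sup>-\<^sup>1 y\<close>, the exact expansion of \<open>f\<close> along the segment from \<open>H\<close> towards
  any \<open>H'\<close> of the trace ball gives \<open>x\<^sup>T H' x \<le> f(H) + O(t)\<close>, where \<open>t\<^sup>2\<close> is the slack of the
  minimiser. So \<open>x / \<surd>f(H)\<close> is nearly in the unit ball of the \<open>\<H>\<close>-norm, and \<open>f(H) = \<langle>x, y\<rangle>\<close>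
  yields that \<open>inf f\<close> is at most the square of the dual \<open>\<H>\<close>-norm of \<open>y\<close>. Finally \<open>P = (H + \<delta> I) / (1 + d \<delta>)\<close> is a positive definite
  member of the trace ball with \<open>\<parallel>y\<parallel>\<^sup>2\<^bsub>P\<^sup>-\<^sup>1\<^esub> = (1 + d \<delta>) f(H)\<close>; let \<open>\<delta> \<rightarrow> 0\<close>.
\<close>

lemma symmetric_inner_matrix_commute:
  fixes M :: "real^'n^'n"
  assumes "transpose M = M"
  shows "a \<bullet> (M *v b) = b \<bullet> (M *v a)"
proof -
  have "b \<bullet> (M *v a) = (b v* M) \<bullet> a" by (simp add: dot_lmul_matrix)
  also have "b v* M = transpose M *v b" by simp
  finally show ?thesis using assms by (simp add: inner_commute)
qed

lemma psd_cauchy_schwarz: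
  fixes M :: "real^'n^'n"
  assumes "psd M"
  shows "(a \<bullet> (M *v b))\<^sup>2 \<le> (a \<bullet> (M *v a)) * (b \<bullet> (M *v b))"
proof -
  have sym: "transpose M = M" and nonneg: "\<And>x. 0 \<le> x \<bullet> (M *v x)"
    using assms by (auto simp: psd_def)
  define A B C where "A = a \<bullet> (M *v a)" and "B = a \<bullet> (M *v b)" and "C = b \<bullet> (M *v b)"
  have quadratic: "0 \<le> A + 2 * l * B + l\<^sup>2 * C" for l
  proof -
    have "0 \<le> (a + l *\<^sub>R b) \<bullet> (M *v (a + l *\<^sub>R b))" by (rule nonneg)
    also have "\<dots> = A + 2 * l * B + l\<^sup>2 * C"
      using symmetric_inner_matrix_commute[OF sym, of b a]
      by (simp add: A_def B_def C_def power2_eq_square algebra_simps)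
    finally show ?thesis .
  qed
  have "0 \<le> A" "0 \<le> C" using nonneg by (auto simp: A_def C_def)
  show ?thesis
  proof (cases "C = 0")
    case True
    then have "B = 0" using quadratic[of "- (A + 1) / (2 * B)"] \<open>0 \<le> A\<close>
      by (cases "B = 0") (auto simp: field_simps)
    with True show ?thesis by (simp add: B_def C_def)
  next
    case False
    with \<open>0 \<le> C\<close> have "0 < C" by simp
    from quadratic[of "- B / C"] have "0 \<le> A * C - B\<^sup>2"
      using \<open>0 < C\<close> by (simp add: field_simps power2_eq_square)
    then show ?thesis by (simp add: A_def B_def C_def algebra_simps)
  qed
qed

lemma inner_axis_matrix_axis: "axis i 1 \<bullet> (H *v axis i 1) = H $ i $ i"
  by (simp add: matrix_vector_mult_basis inner_axis' column_def)

lemma psd_diagonal_nonneg: "psd H \<Longrightarrow> 0 \<le> H $ i $ i"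
  by (metis inner_axis_matrix_axis psd_def)

lemma psd_matrix_vector_component_le:
  fixes H :: "real^'n^'n"
  assumes "psd H"
  shows "\<bar>(H *v u) $ i\<bar> \<le> sqrt (H $ i $ i) * sqrt (u \<bullet> (H *v u))"
proof -
  have "((H *v u) $ i)\<^sup>2 = (axis i 1 \<bullet> (H *v u))\<^sup>2" by (simp add: inner_axis')
  also have "\<dots> \<le> H $ i $ i * (u \<bullet> (H *v u))"
    using psd_cauchy_schwarz[OF assms, of "axis i 1" u] by (simp add: inner_axis_matrix_axis)
  finally show ?thesis by (metis real_sqrt_abs real_sqrt_le_mono real_sqrt_mult)
qed

lemma psd_quadratic_le_trace:
  fixes H :: "real^'n^'n"
  assumes "psd H"
  shows "u \<bullet> (H *v u) \<le> trace H * (norm u)\<^sup>2"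
proof -
  define q where "q = u \<bullet> (H *v u)"
  have "0 \<le> q" using assms by (auto simp: psd_def q_def)
  have component: "\<bar>(H *v u) $ i\<bar> \<le> sqrt (H $ i $ i) * sqrt q" for i
    unfolding q_def by (rule psd_matrix_vector_component_le[OF assms])
  define a b where "a = (\<chi> i. \<bar>u $ i\<bar>)" and "b = (\<chi> i. sqrt (H $ i $ i))"
  have "q = (\<Sum>i\<in>UNIV. u $ i * (H *v u) $ i)" by (simp add: q_def inner_vec_def)
  also have "\<dots> \<le> (\<Sum>i\<in>UNIV. \<bar>u $ i\<bar> * (sqrt (H $ i $ i) * sqrt q))"
  proof (rule sum_mono)
    fix i
    have "u $ i * (H *v u) $ i \<le> \<bar>u $ i\<bar> * \<bar>(H *v u) $ i\<bar>" by (simp add: abs_mult[symmetric])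
    also have "\<dots> \<le> \<bar>u $ i\<bar> * (sqrt (H $ i $ i) * sqrt q)" by (rule mult_left_mono[OF component]) simp
    finally show "u $ i * (H *v u) $ i \<le> \<bar>u $ i\<bar> * (sqrt (H $ i $ i) * sqrt q)" .
  qed
  also have "\<dots> = (a \<bullet> b) * sqrt q"
    by (simp add: a_def b_def inner_vec_def sum_distrib_right mult.assoc)
  also have "\<dots> \<le> (norm a * norm b) * sqrt q"
    by (rule mult_right_mono[OF norm_cauchy_schwarz]) (simp add: \<open>0 \<le> q\<close>)
  also have "norm a = norm u" by (simp add: a_def norm_vec_def L2_set_def)
  also have "norm b = sqrt (trace H)"
    using psd_diagonal_nonneg[OF assms] by (simp add: b_def norm_vec_def L2_set_def trace_def)
  finally have bound: "sqrt q * sqrt q \<le> (norm u * sqrt (trace H)) * sqrt q"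
    using \<open>0 \<le> q\<close> by simp
  have "sqrt q \<le> norm u * sqrt (trace H)"
  proof (cases "q = 0")
    case True
    then show ?thesis by (simp add: psd_diagonal_nonneg[OF assms] trace_def sum_nonneg)
  next
    case False
    with \<open>0 \<le> q\<close> have "0 < sqrt q" by simp
    with bound show ?thesis by (rule mult_right_le_imp_le)
  qed
  then have "(sqrt q)\<^sup>2 \<le> (norm u * sqrt (trace H))\<^sup>2"
    by (rule power_mono) (simp add: \<open>0 \<le> q\<close>)
  then show ?thesis
    using \<open>0 \<le> q\<close> psd_diagonal_nonneg[OF assms]
    by (simp add: q_def power_mult_distrib trace_def sum_nonneg mult.commute)
qed

lemma psd_quadratic_le_norm:
  fixes H :: "real^'n^'n"
  assumes "psd H" "trace H \<le> 1"
  shows "u \<bullet> (H *v u) \<le> (norm u)\<^sup>2"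
  using psd_quadratic_le_trace[OF assms(1), of u] mult_right_mono[OF assms(2), of "(norm u)\<^sup>2"]
  by simp

lemma psd_bilinear_le_norm:
  fixes H :: "real^'n^'n"
  assumes "psd H" "trace H \<le> 1"
  shows "\<bar>a \<bullet> (H *v b)\<bar> \<le> norm a * norm b"
proof -
  have "0 \<le> b \<bullet> (H *v b)" using assms(1) by (auto simp: psd_def)
  have "\<bar>a \<bullet> (H *v b)\<bar>\<^sup>2 \<le> (a \<bullet> (H *v a)) * (b \<bullet> (H *v b))"
    using psd_cauchy_schwarz[OF assms(1)] by simp
  also have "\<dots> \<le> (norm a)\<^sup>2 * (norm b)\<^sup>2"
    using \<open>0 \<le> b \<bullet> (H *v b)\<close>
    by (intro mult_mono psd_quadratic_le_norm[OF assms]) simp_all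
  also have "\<dots> = (norm a * norm b)\<^sup>2" by (simp add: power_mult_distrib)
  finally show ?thesis by (rule power2_le_imp_le) simp
qed

lemma transpose_add: "transpose (A + B) = transpose A + transpose (B :: 'a::semiring_1^'n^'n)"
  by (simp add: transpose_def vec_eq_iff)

lemma trace_scaleR: "trace (c *\<^sub>R (A :: real^'n^'n)) = c * trace A"
  by (simp add: trace_def sum_distrib_left)

lemma psd_add: "psd A \<Longrightarrow> psd B \<Longrightarrow> psd (A + B)"
  unfolding psd_def by (simp add: transpose_add matrix_vector_mult_add_rdistrib inner_add_right)

lemma psd_scaleR: "psd A \<Longrightarrow> 0 \<le> c \<Longrightarrow> psd (c *\<^sub>R A)"
  unfolding psd_def by (simp add: transpose_scalar flip: scaleR_matrix_vector_assoc)

lemma pd_imp_psd: "pd A \<Longrightarrow> psd A"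
  unfolding pd_def psd_def by (metis inner_zero_left less_eq_real_def)

lemma pd_scaleR: "pd A \<Longrightarrow> 0 < c \<Longrightarrow> pd (c *\<^sub>R A)"
  unfolding pd_def by (simp add: transpose_scalar flip: scaleR_matrix_vector_assoc)

lemma pd_mat_1: "pd (mat 1)"
  unfolding pd_def by simp

lemma inner_add_scaleR_mat_1:
  fixes H :: "real^'n^'n"
  shows "x \<bullet> ((H + d *\<^sub>R mat 1) *v x) = x \<bullet> (H *v x) + d * (norm x)\<^sup>2"
  by (simp add: matrix_vector_mult_add_rdistrib inner_add_right power2_norm_eq_inner
      flip: scaleR_matrix_vector_assoc)

lemma pd_add_scaleR_mat_1:
  fixes H :: "real^'n^'n"
  assumes "psd H" "0 < d"
  shows "pd (H + d *\<^sub>R mat 1)"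
  unfolding pd_def
proof
  show "transpose (H + d *\<^sub>R mat 1) = H + d *\<^sub>R mat 1"
    using assms(1) by (simp add: psd_def transpose_add transpose_scalar)
  show "\<forall>x. x \<noteq> 0 \<longrightarrow> 0 < x \<bullet> ((H + d *\<^sub>R mat 1) *v x)"
    using assms by (auto simp: inner_add_scaleR_mat_1 psd_def add_nonneg_pos)
qed

lemma pd_invertible:
  fixes P :: "real^'n^'n"
  assumes "pd P"
  shows "invertible P"
proof -
  have "x = 0" if "P *v x = 0" for x
    using assms that unfolding pd_def by (metis inner_zero_right less_irrefl)
  then show ?thesis using matrix_left_invertible_ker invertible_left_inverse by blast
qed

lemma matrix_inv_cancel:
  fixes M :: "real^'n^'n"
  assumes "invertible M"
  shows "M ** matrix_inv M = mat 1" "matrix_inv M ** M = mat 1"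
proof -
  have "\<exists>A. M ** A = mat 1 \<and> A ** M = mat 1" using assms by (simp add: invertible_def)
  then have "M ** matrix_inv M = mat 1 \<and> matrix_inv M ** M = mat 1"
    unfolding matrix_inv_def by (rule someI_ex)
  then show "M ** matrix_inv M = mat 1" "matrix_inv M ** M = mat 1" by auto
qed

lemma matrix_vector_mult_matrix_inv:
  fixes M :: "real^'n^'n"
  assumes "invertible M"
  shows "M *v (matrix_inv M *v y) = y"
  by (simp add: matrix_vector_mul_assoc matrix_inv_cancel[OF assms])

lemma matrix_inv_vector_eqI:
  fixes M :: "real^'n^'n"
  assumes "invertible M" "M *v z = y"
  shows "matrix_inv M *v y = z"
  using assms(2)[symmetric] by (simp add: matrix_vector_mul_assoc matrix_inv_cancel[OF assms(1)])

lemma Hnorm_scaleR: "Hnorm H (c *\<^sub>R x) = \<bar>c\<bar> * Hnorm H x"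
  by (simp add: Hnorm_def matrix_vector_mult_scaleR real_sqrt_mult mult.assoc[symmetric]
      flip: power2_eq_square)

lemma Hnorm_matrix_inv:
  fixes P :: "real^'n^'n"
  assumes "pd P"
  shows "Hnorm (matrix_inv P) y = Hnorm P (matrix_inv P *v y)"
  by (simp add: Hnorm_def matrix_vector_mult_matrix_inv[OF pd_invertible[OF assms]] inner_commute)

lemma Hnorm_nonneg: "psd H \<Longrightarrow> 0 \<le> Hnorm H x"
  by (simp add: Hnorm_def psd_def)

lemma Hnorm_le_norm:
  assumes "psd H" "trace H \<le> 1"
  shows "Hnorm H x \<le> norm x"
proof -
  have "Hnorm H x \<le> sqrt ((norm x)\<^sup>2)"
    unfolding Hnorm_def by (rule real_sqrt_le_mono[OF psd_quadratic_le_norm[OF assms]])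
  then show ?thesis by simp
qed

lemma inner_le_Hnorm_matrix_inv:
  fixes P :: "real^'n^'n"
  assumes "pd P" "Hnorm P x \<le> 1"
  shows "x \<bullet> y \<le> Hnorm (matrix_inv P) y"
proof -
  define z where "z = matrix_inv P *v y"
  have "P *v z = y"
    by (simp add: z_def matrix_vector_mult_matrix_inv[OF pd_invertible[OF assms(1)]])
  have "\<bar>x \<bullet> y\<bar> = sqrt ((x \<bullet> (P *v z))\<^sup>2)" using \<open>P *v z = y\<close> by simp
  also have "\<dots> \<le> sqrt ((x \<bullet> (P *v x)) * (z \<bullet> (P *v z)))"
    by (rule real_sqrt_le_mono[OF psd_cauchy_schwarz[OF pd_imp_psd[OF assms(1)]]])
  also have "\<dots> = Hnorm P x * Hnorm P z" by (simp add: Hnorm_def real_sqrt_mult)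
  also have "\<dots> \<le> Hnorm P z"
    by (rule mult_left_le_one_le) (simp_all add: Hnorm_nonneg pd_imp_psd assms)
  finally show ?thesis by (simp add: Hnorm_matrix_inv[OF assms(1)] z_def)
qed

lemma dual_norm_Hnorm:
  fixes P :: "real^'n^'n"
  assumes "pd P"
  shows "dual_norm (Hnorm P) y = Hnorm (matrix_inv P) y"
proof -
  define z where "z = matrix_inv P *v y"
  have "P *v z = y"
    by (simp add: z_def matrix_vector_mult_matrix_inv[OF pd_invertible[OF assms]])
  have "0 \<le> Hnorm P z" by (rule Hnorm_nonneg[OF pd_imp_psd[OF assms]])
  obtain x where x: "Hnorm P x \<le> 1" "x \<bullet> y = Hnorm P z"
  proof (cases "Hnorm P z = 0")
    case True
    then show thesis by (intro that[of 0]) (simp_all add: Hnorm_def)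
  next
    case False
    with \<open>0 \<le> Hnorm P z\<close> have "0 < Hnorm P z" by simp
    let ?x = "(1 / Hnorm P z) *\<^sub>R z"
    have "Hnorm P ?x \<le> 1" using \<open>0 < Hnorm P z\<close> by (simp add: Hnorm_scaleR)
    moreover have "z \<bullet> y = (Hnorm P z)\<^sup>2"
      using \<open>P *v z = y\<close> \<open>0 \<le> Hnorm P z\<close> unfolding Hnorm_def
      by (metis real_sqrt_ge_0_iff real_sqrt_pow2)
    then have "?x \<bullet> y = Hnorm P z"
      using \<open>0 < Hnorm P z\<close> by (simp add: power2_eq_square)
    ultimately show thesis by (rule that)
  qed
  show ?thesis
    unfolding dual_norm_def
  proof (rule cSup_eq_maximum)
    have "Hnorm (matrix_inv P) y = x \<bullet> y" by (simp add: x(2) Hnorm_matrix_inv[OF assms] z_def)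
    then show "Hnorm (matrix_inv P) y \<in> {x \<bullet> y |x. Hnorm P x \<le> 1}" using x(1) by blast
    show "w \<le> Hnorm (matrix_inv P) y" if "w \<in> {x \<bullet> y |x. Hnorm P x \<le> 1}" for w
      using that inner_le_Hnorm_matrix_inv[OF assms] by blast
  qed
qed

lemma norm_matrix_diff_le:
  fixes H H' :: "real^'n^'n"
  assumes "psd H" "trace H \<le> 1" "psd H'" "trace H' \<le> 1"
  shows "norm ((H' - H) *v x) \<le> 2 * norm x"
proof -
  define u where "u = (H' - H) *v x"
  have "(norm u)\<^sup>2 = u \<bullet> (H' *v x) - u \<bullet> (H *v x)"
    by (simp add: u_def power2_norm_eq_inner matrix_vector_mult_diff_rdistrib inner_diff_right)
  also have "\<dots> \<le> norm u * norm x + norm u * norm x"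
    using psd_bilinear_le_norm[OF assms(1,2), of u x] psd_bilinear_le_norm[OF assms(3,4), of u x]
    by linarith
  finally have "norm u * norm u \<le> (2 * norm x) * norm u" by (simp add: power2_eq_square field_simps)
  then show ?thesis
    by (cases "norm u = 0") (auto simp: u_def intro: mult_right_le_imp_le)
qed

text \<open>\<open>shifted_inv_form \<delta> H y\<close> is \<open>y\<^sup>T (H + \<delta> I)\<^sup>-\<^sup>1 y\<close>: the shift by \<open>\<delta> > 0\<close> makes
  the inverse exist for merely semidefinite \<open>H\<close>.\<close>

definition shifted_solution :: "real \<Rightarrow> real^'n^'n \<Rightarrow> real^'n \<Rightarrow> real^'n" where
  "shifted_solution \<delta> H y = matrix_inv (H + \<delta> *\<^sub>R mat 1) *v y"

definition shifted_inv_form :: "real \<Rightarrow> real^'n^'n \<Rightarrow> real^'n \<Rightarrow> real" where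
  "shifted_inv_form \<delta> H y = y \<bullet> shifted_solution \<delta> H y"

lemma shifted_solution:
  assumes "psd H" "0 < \<delta>"
  shows "(H + \<delta> *\<^sub>R mat 1) *v shifted_solution \<delta> H y = y"
  unfolding shifted_solution_def
  by (rule matrix_vector_mult_matrix_inv[OF pd_invertible[OF pd_add_scaleR_mat_1[OF assms]]])

lemma shifted_solution_unique:
  assumes "psd H" "0 < \<delta>" "(H + \<delta> *\<^sub>R mat 1) *v z = y"
  shows "shifted_solution \<delta> H y = z"
  unfolding shifted_solution_def
  by (rule matrix_inv_vector_eqI[OF pd_invertible[OF pd_add_scaleR_mat_1[OF assms(1,2)]] assms(3)])

lemma shifted_inv_form_eq:
  assumes "psd H" "0 < \<delta>"
  shows "shifted_inv_form \<delta> H y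
           = shifted_solution \<delta> H y \<bullet> (H *v shifted_solution \<delta> H y)
             + \<delta> * (norm (shifted_solution \<delta> H y))\<^sup>2"
  using shifted_solution[OF assms, of y]
  by (metis inner_add_scaleR_mat_1 inner_commute shifted_inv_form_def)

lemma shifted_inv_form_nonneg: "psd H \<Longrightarrow> 0 < \<delta> \<Longrightarrow> 0 \<le> shifted_inv_form \<delta> H y"
  by (simp add: shifted_inv_form_eq psd_def)

lemma norm_shifted_solution_le:
  assumes "psd H" "0 < \<delta>"
  shows "\<delta> * norm (shifted_solution \<delta> H y) \<le> norm y"
proof -
  define x where "x = shifted_solution \<delta> H y"
  have "(\<delta> * norm x) * norm x \<le> shifted_inv_form \<delta> H y"
    using assms by (simp add: shifted_inv_form_eq psd_def x_def power2_eq_square mult.assoc)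
  also have "\<dots> \<le> norm y * norm x"
    unfolding shifted_inv_form_def x_def[symmetric] by (rule norm_cauchy_schwarz)
  finally show ?thesis
    by (cases "norm x = 0") (auto simp: x_def assms(2) intro: mult_right_le_imp_le)
qed

lemma shifted_inv_form_le:
  assumes "psd H" "0 < \<delta>"
  shows "shifted_inv_form \<delta> H y \<le> (norm y)\<^sup>2 / \<delta>"
proof -
  have "shifted_inv_form \<delta> H y \<le> norm y * norm (shifted_solution \<delta> H y)"
    unfolding shifted_inv_form_def by (rule norm_cauchy_schwarz)
  also have "\<dots> \<le> norm y * (norm y / \<delta>)"
    using norm_shifted_solution_le[OF assms, of y] assms(2)
    by (intro mult_left_mono) (simp_all add: field_simps)
  finally show ?thesis by (simp add: power2_eq_square)
qed

lemma shifted_inv_form_segment: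
  fixes H H' :: "real^'n^'n" and y :: "real^'n"
  assumes "psd H" "psd H'" "0 < \<delta>" "0 \<le> t" "t \<le> 1"
  defines "x \<equiv> shifted_solution \<delta> H y" and "G \<equiv> (1 - t) *\<^sub>R H + t *\<^sub>R H'"
  shows "shifted_inv_form \<delta> G y
           = shifted_inv_form \<delta> H y - t * (x \<bullet> ((H' - H) *v x))
             + t\<^sup>2 * shifted_inv_form \<delta> G ((H' - H) *v x)"
proof -
  define u where "u = (H' - H) *v x"
  define v where "v = shifted_solution \<delta> G u"
  have "psd G" using assms by (simp add: G_def psd_add psd_scaleR)
  have N: "G + \<delta> *\<^sub>R mat 1 = (H + \<delta> *\<^sub>R mat 1) + t *\<^sub>R (H' - H)"
    by (simp add: G_def algebra_simps)
  have sym: "transpose (G + \<delta> *\<^sub>R mat 1) = G + \<delta> *\<^sub>R mat 1"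
    using pd_add_scaleR_mat_1[OF \<open>psd G\<close> assms(3)] by (simp add: pd_def)
  have Nv: "(G + \<delta> *\<^sub>R mat 1) *v v = u" unfolding v_def by (rule shifted_solution[OF \<open>psd G\<close> assms(3)])
  have z: "shifted_solution \<delta> G y = x - t *\<^sub>R v"
  proof (rule shifted_solution_unique[OF \<open>psd G\<close> assms(3)])
    show "(G + \<delta> *\<^sub>R mat 1) *v (x - t *\<^sub>R v) = y"
      using shifted_solution[OF assms(1,3), of y] Nv
      by (simp add: N matrix_vector_mult_diff_distrib matrix_vector_mult_add_rdistrib
          matrix_vector_mult_scaleR u_def x_def flip: scaleR_matrix_vector_assoc)
  qed
  have yv: "y \<bullet> v = x \<bullet> u - t * (v \<bullet> u)"
  proof -
    have "y \<bullet> v = ((G + \<delta> *\<^sub>R mat 1) *v (x - t *\<^sub>R v)) \<bullet> v"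
      by (simp add: shifted_solution[OF \<open>psd G\<close> assms(3)] flip: z)
    also have "\<dots> = (x - t *\<^sub>R v) \<bullet> u"
      using symmetric_inner_matrix_commute[OF sym, of v "x - t *\<^sub>R v"] Nv by (simp add: inner_commute)
    finally show ?thesis by (simp add: inner_diff_left)
  qed
  have "shifted_inv_form \<delta> G y = y \<bullet> x - t * (y \<bullet> v)"
    by (simp add: shifted_inv_form_def z inner_diff_right)
  also have "\<dots> = y \<bullet> x - t * (x \<bullet> u) + t\<^sup>2 * (u \<bullet> v)"
    unfolding yv by (simp add: power2_eq_square inner_commute algebra_simps)
  also have "y \<bullet> x = shifted_inv_form \<delta> H y" by (simp add: shifted_inv_form_def x_def)
  also have "u \<bullet> v = shifted_inv_form \<delta> G u" by (simp add: shifted_inv_form_def v_def)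
  finally show ?thesis by (simp only: u_def)
qed

lemma shifted_inv_form_matrix_diff_le:
  fixes H H' G :: "real^'n^'n"
  assumes "psd H" "trace H \<le> 1" "psd H'" "trace H' \<le> 1" "psd G" "0 < \<delta>"
  shows "shifted_inv_form \<delta> G ((H' - H) *v shifted_solution \<delta> H y) \<le> 4 * (norm y)\<^sup>2 / \<delta> ^ 3"
proof -
  define x where "x = shifted_solution \<delta> H y"
  have "shifted_inv_form \<delta> G ((H' - H) *v x) \<le> (norm ((H' - H) *v x))\<^sup>2 / \<delta>"
    using assms(5,6) by (rule shifted_inv_form_le)
  also have "\<dots> \<le> (2 * norm x)\<^sup>2 / \<delta>"
    using norm_matrix_diff_le[OF assms(1-4)] \<open>0 < \<delta>\<close> by (intro divide_right_mono power_mono) simp_all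
  also have "\<dots> = 4 * (\<delta> * norm x)\<^sup>2 / \<delta> ^ 3"
    using \<open>0 < \<delta>\<close> by (simp add: field_simps power2_eq_square power3_eq_cube)
  also have "\<dots> \<le> 4 * (norm y)\<^sup>2 / \<delta> ^ 3"
    unfolding x_def using norm_shifted_solution_le[OF assms(1,6)] \<open>0 < \<delta>\<close>
    by (intro divide_right_mono mult_left_mono power_mono) simp_all
  finally show ?thesis by (simp only: x_def)
qed

lemma Hnorm_matrix_inv_normalized_shift:
  assumes "psd H" "0 < \<delta>" "0 < s"
  shows "(Hnorm (matrix_inv ((1 / s) *\<^sub>R (H + \<delta> *\<^sub>R mat 1))) y)\<^sup>2 = s * shifted_inv_form \<delta> H y"
proof -
  define P where "P = (1 / s) *\<^sub>R (H + \<delta> *\<^sub>R mat 1)"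
  have "pd P" unfolding P_def using assms by (intro pd_scaleR pd_add_scaleR_mat_1) simp_all
  have "matrix_inv P *v y = s *\<^sub>R shifted_solution \<delta> H y"
    using pd_invertible[OF \<open>pd P\<close>] shifted_solution[OF assms(1,2), of y] assms(3)
    by (intro matrix_inv_vector_eqI) (simp_all add: P_def matrix_vector_mult_scaleR flip: scaleR_matrix_vector_assoc)
  then have "Hnorm (matrix_inv P) y = sqrt (s * shifted_inv_form \<delta> H y)"
    by (simp add: Hnorm_def shifted_inv_form_def)
  then show ?thesis
    using assms shifted_inv_form_nonneg[OF assms(1,2)] by (simp add: P_def)
qed

lemma le_of_forall_linear_slack:
  fixes a b k :: real
  assumes "\<And>t. 0 < t \<Longrightarrow> t < 1 \<Longrightarrow> a \<le> b + t * k"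
  shows "a \<le> b"
proof (rule tendsto_le[OF trivial_limit_at_right_real])
  show "((\<lambda>t. b + t * k) \<longlongrightarrow> b) (at_right 0)"
    by (auto intro!: tendsto_eq_intros)
  show "((\<lambda>t. a) \<longlongrightarrow> a) (at_right 0)" by simp
  show "\<forall>\<^sub>F t in at_right 0. a \<le> b + t * k"
    using eventually_at_right_real[of 0 1] by (rule eventually_mono) (auto intro: assms)
qed

locale preconditioner_set =
  fixes \<H> :: "(real^'n^'n) set"
  assumes well_structured: "well_structured \<H>"
begin

abbreviation trace_ball :: "(real^'n^'n) set" where
  "trace_ball \<equiv> {H\<in>\<H>. trace H \<le> 1}"

abbreviation pd_trace_ball :: "(real^'n^'n) set" where
  "pd_trace_ball \<equiv> {H\<in>\<H>. pd H \<and> trace H \<le> 1}"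

lemma psd_if_mem: "H \<in> \<H> \<Longrightarrow> psd H"
  using well_structured unfolding well_structured_def by auto

lemma add_mem: "H \<in> \<H> \<Longrightarrow> H' \<in> \<H> \<Longrightarrow> H + H' \<in> \<H>"
  using well_structured unfolding well_structured_def matrix_algebra_def by (auto intro: psd_add)

lemma scaleR_mem: "H \<in> \<H> \<Longrightarrow> 0 \<le> c \<Longrightarrow> c *\<^sub>R H \<in> \<H>"
  using well_structured unfolding well_structured_def matrix_algebra_def by (auto intro: psd_scaleR)

lemma mat_1_mem: "mat 1 \<in> \<H>"
  using well_structured pd_imp_psd[OF pd_mat_1] unfolding well_structured_def matrix_algebra_def by auto

lemma segment_mem_trace_ball:
  assumes "H \<in> trace_ball" "H' \<in> trace_ball" "0 \<le> t" "t \<le> 1"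
  shows "(1 - t) *\<^sub>R H + t *\<^sub>R H' \<in> trace_ball"
proof -
  have "(1 - t) * trace H + t * trace H' \<le> (1 - t) * 1 + t * 1"
    using assms by (intro add_mono mult_left_mono) simp_all
  then show ?thesis
    using assms by (simp add: add_mem scaleR_mem trace_add trace_scaleR)
qed

lemma normalized_identity_mem: "(1 / real CARD('n)) *\<^sub>R mat 1 \<in> pd_trace_ball"
  using mat_1_mem by (simp add: scaleR_mem pd_scaleR pd_mat_1 trace_scaleR trace_I)

lemma normalized_shift_mem:
  assumes "H \<in> trace_ball" "0 < \<delta>"
  shows "(1 / (1 + real CARD('n) * \<delta>)) *\<^sub>R (H + \<delta> *\<^sub>R mat 1) \<in> pd_trace_ball"
proof -
  have "pd (H + \<delta> *\<^sub>R mat 1)" using assms psd_if_mem by (simp add: pd_add_scaleR_mat_1)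
  moreover have "trace H + \<delta> * real CARD('n) \<le> 1 + real CARD('n) * \<delta>" using assms by simp
  ultimately show ?thesis
    using assms mat_1_mem
    by (simp add: add_mem scaleR_mem pd_scaleR add_pos_nonneg trace_add trace_scaleR trace_I)
qed

lemma Hnorm_le_setnorm: "H \<in> trace_ball \<Longrightarrow> Hnorm H x \<le> setnorm \<H> x"
  unfolding setnorm_def
proof (rule cSUP_upper)
  show "bdd_above ((\<lambda>G. Hnorm G x) ` trace_ball)"
    using psd_if_mem by (intro bdd_aboveI2[of _ _ "norm x"] Hnorm_le_norm) auto
qed

lemma setnorm_le: "(\<And>H. H \<in> trace_ball \<Longrightarrow> Hnorm H x \<le> b) \<Longrightarrow> setnorm \<H> x \<le> b"
  unfolding setnorm_def using normalized_identity_mem by (intro cSUP_least) auto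

lemma inner_le_dual_setnorm:
  assumes "\<And>H. H \<in> trace_ball \<Longrightarrow> Hnorm H x \<le> \<rho>" "0 < \<rho>"
  shows "x \<bullet> y \<le> \<rho> * dual_norm (setnorm \<H>) y"
proof -
  define P where "P = (1 / real CARD('n)) *\<^sub>R (mat 1 :: real^'n^'n)"
  have "P \<in> pd_trace_ball" unfolding P_def by (rule normalized_identity_mem)
  have bdd: "bdd_above {x \<bullet> y |x. setnorm \<H> x \<le> 1}"
  proof (rule bdd_aboveI[of _ "Hnorm (matrix_inv P) y"], clarify)
    fix x assume "setnorm \<H> x \<le> 1"
    then have "Hnorm P x \<le> 1" using Hnorm_le_setnorm[of P x] \<open>P \<in> pd_trace_ball\<close> by simp
    then show "x \<bullet> y \<le> Hnorm (matrix_inv P) y"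
      using \<open>P \<in> pd_trace_ball\<close> by (simp add: inner_le_Hnorm_matrix_inv)
  qed
  have "setnorm \<H> ((1 / \<rho>) *\<^sub>R x) \<le> 1"
    using assms by (intro setnorm_le) (simp add: Hnorm_scaleR field_simps)
  then have "((1 / \<rho>) *\<^sub>R x) \<bullet> y \<le> dual_norm (setnorm \<H>) y"
    unfolding dual_norm_def by (intro cSup_upper[OF _ bdd]) blast
  with \<open>0 < \<rho>\<close> show ?thesis by (simp add: field_simps)
qed

lemma dual_setnorm_nonneg: "0 \<le> dual_norm (setnorm \<H>) y"
  using inner_le_dual_setnorm[of 0 1 y] by (simp add: Hnorm_def)

lemma dual_setnorm_le_Hnorm_matrix_inv:
  assumes "P \<in> pd_trace_ball"
  shows "dual_norm (setnorm \<H>) y \<le> Hnorm (matrix_inv P) y"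
  unfolding dual_norm_def
proof (rule cSup_least)
  show "{x \<bullet> y |x. setnorm \<H> x \<le> 1} \<noteq> {}"
    using setnorm_le[of 0 1] by (auto simp: Hnorm_def)
  show "w \<le> Hnorm (matrix_inv P) y" if w: "w \<in> {x \<bullet> y |x. setnorm \<H> x \<le> 1}" for w
  proof -
    obtain x where "w = x \<bullet> y" "setnorm \<H> x \<le> 1" using w by blast
    then have "Hnorm P x \<le> 1" using Hnorm_le_setnorm[of P x] assms by simp
    with assms show ?thesis by (simp add: \<open>w = x \<bullet> y\<close> inner_le_Hnorm_matrix_inv)
  qed
qed

lemma near_minimizer_quadratic_bound:
  fixes y :: "real^'n"
  assumes "H \<in> trace_ball" "H' \<in> trace_ball" "0 < \<delta>" "0 < t" "t \<le> 1"
    and near_min: "\<And>G. G \<in> trace_ball \<Longrightarrow> shifted_inv_form \<delta> H y \<le> shifted_inv_form \<delta> G y + t\<^sup>2"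
  defines "x \<equiv> shifted_solution \<delta> H y"
  shows "x \<bullet> (H' *v x) \<le> shifted_inv_form \<delta> H y + t * (1 + 4 * (norm y)\<^sup>2 / \<delta> ^ 3)"
proof -
  define G where "G = (1 - t) *\<^sub>R H + t *\<^sub>R H'"
  define u where "u = (H' - H) *v x"
  have H: "psd H" "trace H \<le> 1" and H': "psd H'" "trace H' \<le> 1"
    using assms(1,2) psd_if_mem by auto
  have "G \<in> trace_ball" unfolding G_def using assms by (intro segment_mem_trace_ball) simp_all
  have second_order: "shifted_inv_form \<delta> G u \<le> 4 * (norm y)\<^sup>2 / \<delta> ^ 3"
    unfolding u_def x_def using H H' psd_if_mem \<open>G \<in> trace_ball\<close> \<open>0 < \<delta>\<close>
    by (intro shifted_inv_form_matrix_diff_le) simp_all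
  have "shifted_inv_form \<delta> H y \<le> shifted_inv_form \<delta> G y + t\<^sup>2"
    by (rule near_min[OF \<open>G \<in> trace_ball\<close>])
  moreover have "shifted_inv_form \<delta> G y
      = shifted_inv_form \<delta> H y - t * (x \<bullet> u) + t\<^sup>2 * shifted_inv_form \<delta> G u"
    unfolding G_def u_def x_def using H(1) H'(1) assms(3-5) by (intro shifted_inv_form_segment) simp_all
  moreover have "t\<^sup>2 * shifted_inv_form \<delta> G u \<le> t\<^sup>2 * (4 * (norm y)\<^sup>2 / \<delta> ^ 3)"
    using second_order by (rule mult_left_mono) simp
  ultimately have "t * (x \<bullet> u) \<le> t\<^sup>2 + t\<^sup>2 * (4 * (norm y)\<^sup>2 / \<delta> ^ 3)"
    by linarith
  also have "\<dots> = t * (t * (1 + 4 * (norm y)\<^sup>2 / \<delta> ^ 3))"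
    by (simp add: power2_eq_square distrib_left)
  finally have "t * (x \<bullet> u) \<le> t * (t * (1 + 4 * (norm y)\<^sup>2 / \<delta> ^ 3))" .
  then have "x \<bullet> u \<le> t * (1 + 4 * (norm y)\<^sup>2 / \<delta> ^ 3)"
    using \<open>0 < t\<close> by (rule mult_left_le_imp_le)
  moreover have "x \<bullet> u = x \<bullet> (H' *v x) - x \<bullet> (H *v x)"
    by (simp add: u_def matrix_vector_mult_diff_rdistrib inner_diff_right)
  moreover have "x \<bullet> (H *v x) \<le> shifted_inv_form \<delta> H y"
    using shifted_inv_form_eq[OF H(1) \<open>0 < \<delta>\<close>, of y] \<open>0 < \<delta>\<close> by (simp add: x_def)
  ultimately show ?thesis by linarith
qed

lemma near_minimizer_sq_le:
  fixes y :: "real^'n"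
  assumes "H \<in> trace_ball" "0 < \<delta>" "0 < t" "t \<le> 1"
    and near_min: "\<And>G. G \<in> trace_ball \<Longrightarrow> shifted_inv_form \<delta> H y \<le> shifted_inv_form \<delta> G y + t\<^sup>2"
  shows "(shifted_inv_form \<delta> H y)\<^sup>2
           \<le> (dual_norm (setnorm \<H>) y)\<^sup>2 * (shifted_inv_form \<delta> H y + t * (1 + 4 * (norm y)\<^sup>2 / \<delta> ^ 3))"
proof -
  define a where "a = shifted_inv_form \<delta> H y"
  define c where "c = 1 + 4 * (norm y)\<^sup>2 / \<delta> ^ 3"
  define \<rho> where "\<rho> = sqrt (a + t * c)"
  have "0 \<le> a" unfolding a_def using assms(1,2) psd_if_mem by (simp add: shifted_inv_form_nonneg)
  moreover have "0 < c" unfolding c_def using \<open>0 < \<delta>\<close> by (simp add: add_pos_nonneg)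
  ultimately have "0 < \<rho>" unfolding \<rho>_def using \<open>0 < t\<close> by (simp add: add_nonneg_pos)
  have "Hnorm H' (shifted_solution \<delta> H y) \<le> \<rho>" if "H' \<in> trace_ball" for H'
    unfolding Hnorm_def \<rho>_def a_def c_def
    using near_minimizer_quadratic_bound[OF assms(1) that assms(2-4) near_min] by simp
  then have "shifted_solution \<delta> H y \<bullet> y \<le> \<rho> * dual_norm (setnorm \<H>) y"
    using \<open>0 < \<rho>\<close> by (rule inner_le_dual_setnorm)
  then have "a \<le> \<rho> * dual_norm (setnorm \<H>) y" by (simp add: a_def shifted_inv_form_def inner_commute)
  then have "a\<^sup>2 \<le> (\<rho> * dual_norm (setnorm \<H>) y)\<^sup>2"
    using \<open>0 \<le> a\<close> by (rule power_mono)
  also have "\<dots> = (dual_norm (setnorm \<H>) y)\<^sup>2 * (a + t * c)"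
    using \<open>0 \<le> a\<close> \<open>0 < c\<close> \<open>0 < t\<close> by (simp add: \<rho>_def power_mult_distrib)
  finally show ?thesis by (simp add: a_def c_def)
qed

lemma INF_shifted_inv_form_le_dual_setnorm:
  assumes "0 < \<delta>"
  shows "(INF H\<in>trace_ball. shifted_inv_form \<delta> H y) \<le> (dual_norm (setnorm \<H>) y)\<^sup>2"
proof -
  define m where "m = (INF H\<in>trace_ball. shifted_inv_form \<delta> H y)"
  define v where "v = dual_norm (setnorm \<H>) y"
  define c where "c = 1 + 4 * (norm y)\<^sup>2 / \<delta> ^ 3"
  have "trace_ball \<noteq> {}" using normalized_identity_mem by blast
  have bdd: "bdd_below ((\<lambda>H. shifted_inv_form \<delta> H y) ` trace_ball)"
    using assms psd_if_mem by (intro bdd_belowI2[of _ 0]) (simp add: shifted_inv_form_nonneg)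
  have m_le: "m \<le> shifted_inv_form \<delta> G y" if "G \<in> trace_ball" for G
    unfolding m_def using bdd that by (rule cINF_lower)
  show ?thesis
  proof (cases "m \<le> 0")
    case True
    then show ?thesis by (simp add: m_def[symmetric] order_trans[OF _ zero_le_power2])
  next
    case False
    then have "0 < m" by simp
    have "m \<le> v\<^sup>2 + t * (v\<^sup>2 * c / m)" if "0 < t" "t < 1" for t
    proof -
      have "m < m + t\<^sup>2" using \<open>0 < t\<close> by simp
      then obtain H where H: "H \<in> trace_ball" "shifted_inv_form \<delta> H y < m + t\<^sup>2"
        using cINF_less_iff[OF \<open>trace_ball \<noteq> {}\<close> bdd] unfolding m_def by blast
      define a where "a = shifted_inv_form \<delta> H y"
      have "m \<le> a" unfolding a_def by (rule m_le[OF H(1)])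
      have "a\<^sup>2 \<le> v\<^sup>2 * (a + t * c)"
        unfolding a_def v_def c_def
        using H m_le that by (intro near_minimizer_sq_le assms) force+
      then have "a \<le> v\<^sup>2 + t * (v\<^sup>2 * c / a)"
        using \<open>0 < m\<close> \<open>m \<le> a\<close> by (simp add: power2_eq_square field_simps)
      also have "\<dots> \<le> v\<^sup>2 + t * (v\<^sup>2 * c / m)"
        using \<open>0 < m\<close> \<open>m \<le> a\<close> that assms
        by (intro add_left_mono mult_left_mono divide_left_mono) (simp_all add: c_def add_pos_nonneg)
      finally show ?thesis using \<open>m \<le> a\<close> by linarith
    qed
    then show ?thesis unfolding m_def[symmetric] v_def[symmetric] by (rule le_of_forall_linear_slack)
  qed
qed

lemma bdd_below_Hnorm_matrix_inv: "bdd_below ((\<lambda>P. Hnorm (matrix_inv P) y) ` pd_trace_ball)"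
  by (intro bdd_belowI2[of _ 0]) (simp add: Hnorm_matrix_inv Hnorm_nonneg pd_imp_psd)

lemma INF_Hnorm_matrix_inv_sq_le:
  assumes "H \<in> trace_ball" "0 < \<delta>"
  shows "(INF P\<in>pd_trace_ball. Hnorm (matrix_inv P) y)\<^sup>2
           \<le> (1 + real CARD('n) * \<delta>) * shifted_inv_form \<delta> H y"
proof -
  define r where "r = (INF P\<in>pd_trace_ball. Hnorm (matrix_inv P) y)"
  define s where "s = 1 + real CARD('n) * \<delta>"
  have "0 < s" using \<open>0 < \<delta>\<close> by (simp add: s_def add_pos_nonneg)
  have "0 \<le> r" unfolding r_def using normalized_identity_mem
    by (intro cINF_greatest) (auto simp: Hnorm_matrix_inv Hnorm_nonneg pd_imp_psd)
  moreover have "r \<le> Hnorm (matrix_inv ((1 / s) *\<^sub>R (H + \<delta> *\<^sub>R mat 1))) y"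
    unfolding r_def s_def using bdd_below_Hnorm_matrix_inv normalized_shift_mem[OF assms]
    by (rule cINF_lower)
  ultimately have "r\<^sup>2 \<le> (Hnorm (matrix_inv ((1 / s) *\<^sub>R (H + \<delta> *\<^sub>R mat 1))) y)\<^sup>2"
    by (intro power_mono)
  also have "\<dots> = s * shifted_inv_form \<delta> H y"
    using assms psd_if_mem \<open>0 < s\<close> by (simp add: Hnorm_matrix_inv_normalized_shift)
  finally show ?thesis by (simp only: r_def s_def)
qed

lemma INF_Hnorm_matrix_inv_le_dual_setnorm:
  "(INF P\<in>pd_trace_ball. Hnorm (matrix_inv P) y) \<le> dual_norm (setnorm \<H>) y"
proof -
  define r where "r = (INF P\<in>pd_trace_ball. Hnorm (matrix_inv P) y)"
  define v where "v = dual_norm (setnorm \<H>) y"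
  define d where "d = real CARD('n)"
  have "r\<^sup>2 \<le> v\<^sup>2 + \<delta> * (d * v\<^sup>2)" if "0 < \<delta>" "\<delta> < 1" for \<delta>
  proof -
    have "0 < 1 + d * \<delta>" using \<open>0 < \<delta>\<close> by (simp add: d_def add_pos_nonneg)
    have "r\<^sup>2 / (1 + d * \<delta>) \<le> shifted_inv_form \<delta> H y" if "H \<in> trace_ball" for H
      using INF_Hnorm_matrix_inv_sq_le[OF that \<open>0 < \<delta>\<close>, of y] \<open>0 < 1 + d * \<delta>\<close>
      by (simp add: r_def d_def divide_le_eq mult.commute)
    then have "r\<^sup>2 / (1 + d * \<delta>) \<le> (INF H\<in>trace_ball. shifted_inv_form \<delta> H y)"
      using normalized_identity_mem by (intro cINF_greatest) auto
    also have "\<dots> \<le> v\<^sup>2" unfolding v_def by (rule INF_shifted_inv_form_le_dual_setnorm[OF \<open>0 < \<delta>\<close>])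
    finally have "r\<^sup>2 \<le> v\<^sup>2 * (1 + d * \<delta>)" using \<open>0 < 1 + d * \<delta>\<close> by (simp add: divide_le_eq)
    then show ?thesis by (simp add: algebra_simps)
  qed
  then have "r\<^sup>2 \<le> v\<^sup>2" by (rule le_of_forall_linear_slack)
  moreover have "0 \<le> v" unfolding v_def by (rule dual_setnorm_nonneg)
  ultimately have "r \<le> v" by (rule power2_le_imp_le)
  then show ?thesis by (simp only: r_def v_def)
qed

theorem dual_setnorm_eq_INF_Hnorm_matrix_inv:
  "dual_norm (setnorm \<H>) y = (INF P\<in>pd_trace_ball. Hnorm (matrix_inv P) y)"
proof (rule antisym)
  show "dual_norm (setnorm \<H>) y \<le> (INF P\<in>pd_trace_ball. Hnorm (matrix_inv P) y)"
    using normalized_identity_mem by (intro cINF_greatest dual_setnorm_le_Hnorm_matrix_inv) auto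
  show "(INF P\<in>pd_trace_ball. Hnorm (matrix_inv P) y) \<le> dual_norm (setnorm \<H>) y"
    by (rule INF_Hnorm_matrix_inv_le_dual_setnorm)
qed

end

theorem lemma2p1:
  fixes \<H> :: "(real^'n^'n) set" and y :: "real^'n"
  assumes "well_structured \<H>"
  shows "dual_norm (setnorm \<H>) y
           = (INF H\<in>{H\<in>\<H>. pd H \<and> trace H \<le> 1}. dual_norm (Hnorm H) y)
       \<and> (INF H\<in>{H\<in>\<H>. pd H \<and> trace H \<le> 1}. dual_norm (Hnorm H) y)
           = (INF H\<in>{H\<in>\<H>. pd H \<and> trace H \<le> 1}. Hnorm (matrix_inv H) y)"
proof -
  interpret preconditioner_set \<H> by (rule preconditioner_set.intro) (rule assms)
  have "(INF H\<in>pd_trace_ball. dual_norm (Hnorm H) y) = (INF H\<in>pd_trace_ball. Hnorm (matrix_inv H) y)"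
    by (rule INF_cong) (simp_all add: dual_norm_Hnorm)
  with dual_setnorm_eq_INF_Hnorm_matrix_inv show ?thesis by simp
qed

end
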